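(* Let $A,B\in M_2(\mathbb C)$ be nonzero normal matrices. Then $\|A+B\|_2=\|A\|_2+\|B\|_2$ holds if and only if $A$ and $B$ are aligned or skew-aligned. These two cases are mutually exclusive; aligned pairs commute and skew-aligned pairs do not commute.
   Context: $\|\cdot\|_2$ is the operator norm. Normal matrices $A,B$ are aligned if, after a simultaneous unitary conjugation, $A=r_1e^{i\eta}\operatorname{diag}(1,t_1)$ and $B=r_2e^{i\eta}\operatorname{diag}(1,t_2)$ with $r_1,r_2>0$, $\eta\in[0,2\pi)$, $t_1,t_2$ in the closed unit disk. They are skew-aligned if, after a simultaneous unitary conjugation, $A=r_1\begin{pmatrix}e^{i\eta}\cos t&-e^{i\theta}\sin t\\ e^{i\eta}\sin t&e^{i\theta}\cos t\end{pmatrix}$, $B=r_2\begin{pmatrix}e^{i\eta}\cos t&-e^{i\phi}\sin t\\ e^{i\eta}\sin t&e^{i\phi}\cos t\end{pmatrix}$ with $r_1,r_2>0$, $t\in(0,\pi)$, $\eta,\theta,\phi\in[0,2\pi)$, $\phi\ne\theta$. *)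

theory Defs
  imports "HOL-Analysis.Analysis"
begin

text \<open>2x2 complex matrices are modelled as complex^2^2 (rows indexed by 1,2),
  acting on column vectors in complex^2 equipped with the Euclidean norm.\<close>

type_synonym cmat2 = "complex ^ 2 ^ 2"

definition mat2 :: "complex \<Rightarrow> complex \<Rightarrow> complex \<Rightarrow> complex \<Rightarrow> cmat2" where
  "mat2 a b c d = (\<chi> i j. if i = 1 then (if j = 1 then a else b) else (if j = 1 then c else d))"

definition cadj :: "cmat2 \<Rightarrow> cmat2" where
  "cadj A = (\<chi> i j. cnj (A $ j $ i))"

definition unitary2 :: "cmat2 \<Rightarrow> bool" where
  "unitary2 U \<longleftrightarrow> U ** cadj U = mat 1 \<and> cadj U ** U = mat 1"

definition normal2 :: "cmat2 \<Rightarrow> bool" where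
  "normal2 A \<longleftrightarrow> A ** cadj A = cadj A ** A"

definition opnorm2 :: "cmat2 \<Rightarrow> real" where
  "opnorm2 A = onorm (\<lambda>x :: complex ^ 2. A *v x)"

definition aligned :: "cmat2 \<Rightarrow> cmat2 \<Rightarrow> bool" where
  "aligned A B \<longleftrightarrow> (\<exists>U r1 r2 \<eta> t1 t2. unitary2 U \<and> r1 > 0 \<and> r2 > 0 \<and>
     0 \<le> \<eta> \<and> \<eta> < 2 * pi \<and> cmod t1 \<le> 1 \<and> cmod t2 \<le> 1 \<and>
     cadj U ** A ** U = mat2 (of_real r1 * cis \<eta>) 0 0 (of_real r1 * cis \<eta> * t1) \<and>
     cadj U ** B ** U = mat2 (of_real r2 * cis \<eta>) 0 0 (of_real r2 * cis \<eta> * t2))"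

definition skew_aligned :: "cmat2 \<Rightarrow> cmat2 \<Rightarrow> bool" where
  "skew_aligned A B \<longleftrightarrow> (\<exists>U r1 r2 t \<eta> \<theta> \<phi>. unitary2 U \<and> r1 > 0 \<and> r2 > 0 \<and>
     0 < t \<and> t < pi \<and> 0 \<le> \<eta> \<and> \<eta> < 2 * pi \<and> 0 \<le> \<theta> \<and> \<theta> < 2 * pi \<and>
     0 \<le> \<phi> \<and> \<phi> < 2 * pi \<and> \<phi> \<noteq> \<theta> \<and>
     cadj U ** A ** U = mat2 (of_real r1 * cis \<eta> * cos t) (- of_real r1 * cis \<theta> * sin t)
                             (of_real r1 * cis \<eta> * sin t) (of_real r1 * cis \<theta> * cos t) \<and>
     cadj U ** B ** U = mat2 (of_real r2 * cis \<eta> * cos t) (- of_real r2 * cis \<phi> * sin t)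
                             (of_real r2 * cis \<eta> * sin t) (of_real r2 * cis \<phi> * cos t))"

end

theory Submission
  imports Defs
begin

text \<open>
  If \<open>\<parallel>A + B\<parallel> = \<parallel>A\<parallel> + \<parallel>B\<parallel>\<close>, a unit vector \<open>x\<close> at which \<open>A + B\<close> attains its norm gives
  equality in the triangle inequality, so \<open>A x = \<parallel>A\<parallel> u\<close> and \<open>B x = \<parallel>B\<parallel> u\<close> for a common unit vector
  \<open>u\<close>. In an orthonormal basis starting with \<open>x\<close>, the first columns of \<open>A\<close> and \<open>B\<close> are
  \<open>\<parallel>A\<parallel> w\<close> and \<open>\<parallel>B\<parallel> w\<close>. A first column of maximal length is orthogonal to the second column,
  and normality forces the two off-diagonal entries to have equal length. Hence each matrix is
  either diagonal (when \<open>w\<close> is the first basis vector) or its norm times the unitary matrix with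
  first column \<open>w\<close> and some determinant \<open>\<omega>\<close>. Diagonal pairs are aligned; unitary multiples with
  different determinants are skew-aligned, and with equal determinants they are aligned after
  diagonalising the common unitary. Conversely, both normal forms exhibit a common extremal
  vector, and the two cases are separated by commutation: the \<open>(1,1)\<close> entry of \<open>AB - BA\<close> in
  the skew-aligned form is a nonzero multiple of \<open>\<omega>\<^sub>1 - \<omega>\<^sub>2\<close>.
\<close>

lemma of_real_cmod_power2: "complex_of_real (cmod z ^ 2) = cnj z * z"
  by (metis complex_norm_square mult.commute of_real_power)

lemma cmod_power2_add: "cmod (x + y) ^ 2 = cmod x ^ 2 + cmod y ^ 2 + 2 * Re (cnj x * y)"
  unfolding cmod_power2 by (simp add: power2_eq_square algebra_simps)

lemma cmod_power2_add_eq_1_iff: "cmod a ^ 2 + cmod c ^ 2 = 1 \<longleftrightarrow> cnj a * a + cnj c * c = 1"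
proof -
  have "cmod a ^ 2 + cmod c ^ 2 = 1 \<longleftrightarrow> complex_of_real (cmod a ^ 2 + cmod c ^ 2) = 1"
    by (metis of_real_eq_1_iff)
  then show ?thesis
    by (simp only: of_real_add of_real_cmod_power2)
qed

lemma cnj_mult_self_unimodular: "cmod z = 1 \<Longrightarrow> cnj z * z = 1"
  by (metis of_real_cmod_power2 one_power2 of_real_1)

lemma cis_Arg2pi: "cmod z = 1 \<Longrightarrow> cis (Arg2pi z) = z"
  by (simp add: cis_conv_exp complex_norm_eq_1_exp)

lemma Arg2pi_cis: "0 \<le> x \<Longrightarrow> x < 2 * pi \<Longrightarrow> Arg2pi (cis x) = x"
  using Arg2pi_unique[of 1 x "cis x"] by (simp add: cis_conv_exp)

definition vec2 :: "complex \<Rightarrow> complex \<Rightarrow> complex ^ 2" where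
  "vec2 x y = (\<chi> i. if i = 1 then x else y)"

lemma mat2_nth [simp]:
  "mat2 a b c d $ 1 $ 1 = a" "mat2 a b c d $ 1 $ 2 = b"
  "mat2 a b c d $ 2 $ 1 = c" "mat2 a b c d $ 2 $ 2 = d"
  by (simp_all add: mat2_def)

lemma vec2_nth [simp]: "vec2 x y $ 1 = x" "vec2 x y $ 2 = y"
  by (simp_all add: vec2_def)

lemma mat2_expand: "A = mat2 (A $ 1 $ 1) (A $ 1 $ 2) (A $ 2 $ 1) (A $ 2 $ 2)"
  by (simp add: vec_eq_iff forall_2)

lemma vec2_expand: "y = vec2 (y $ 1) (y $ 2)"
  by (simp add: vec_eq_iff forall_2)

lemma mat2_cases: obtains a b c d where "A = mat2 a b c d"
  using mat2_expand by blast

lemma vec2_cases: obtains y1 y2 where "y = vec2 y1 y2"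
  using vec2_expand by blast

lemma mat2_eq_iff [simp]:
  "mat2 a b c d = mat2 a' b' c' d' \<longleftrightarrow> a = a' \<and> b = b' \<and> c = c' \<and> d = d'"
  by (metis mat2_nth)

lemma vec2_eq_iff [simp]: "vec2 a b = vec2 a' b' \<longleftrightarrow> a = a' \<and> b = b'"
  by (metis vec2_nth)

lemma mat2_mult_mat2 [simp]:
  "mat2 a b c d ** mat2 e f g h = mat2 (a*e + b*g) (a*f + b*h) (c*e + d*g) (c*f + d*h)"
  by (subst mat2_expand) (simp add: matrix_matrix_mult_def sum_2)

lemma mat2_mult_vec2 [simp]: "mat2 a b c d *v vec2 x y = vec2 (a*x + b*y) (c*x + d*y)"
  by (subst vec2_expand) (simp add: matrix_vector_mult_def sum_2)

lemma cadj_mat2 [simp]: "cadj (mat2 a b c d) = mat2 (cnj a) (cnj c) (cnj b) (cnj d)"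
  by (subst mat2_expand) (simp add: cadj_def)

lemma scaleR_mat2 [simp]:
  "r *\<^sub>R mat2 a b c d = mat2 (of_real r * a) (of_real r * b) (of_real r * c) (of_real r * d)"
  unfolding vec_eq_iff forall_2 vector_scaleR_component by (simp add: scaleR_conv_of_real)

lemma scaleR_vec2 [simp]: "r *\<^sub>R vec2 x y = vec2 (of_real r * x) (of_real r * y)"
  unfolding vec_eq_iff forall_2 vector_scaleR_component by (simp add: scaleR_conv_of_real)

lemma scaleR_vec_eq: "r *\<^sub>R y = vec2 (of_real r * y $ 1) (of_real r * y $ 2)"
  by (subst (1) vec2_expand[of y]) simp

lemma mat2_first_column: "A *v vec2 1 0 = vec2 (A $ 1 $ 1) (A $ 2 $ 1)"
  by (subst (1) mat2_expand[of A]) simp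

lemma smult_vec2 [simp]: "c *s vec2 x y = vec2 (c * x) (c * y)"
  by (simp add: vec_eq_iff forall_2)

lemma mat2_zero: "(0 :: cmat2) = mat2 0 0 0 0"
  by (subst mat2_expand) simp

lemma mat2_one: "(mat 1 :: cmat2) = mat2 1 0 0 1"
  by (subst mat2_expand) (simp add: mat_def)

lemma norm_vec2: "norm (vec2 x y) = sqrt (cmod x ^ 2 + cmod y ^ 2)"
  by (simp add: norm_vec_def L2_set_def sum_2)

lemma norm_eq_1_iff_coords: "norm (y :: complex ^ 2) = 1 \<longleftrightarrow> cmod (y $ 1) ^ 2 + cmod (y $ 2) ^ 2 = 1"
  by (subst (1) vec2_expand) (simp add: norm_vec2)

lemma norm_mat2_mult_vec2_power2:
  "norm (mat2 a b c d *v vec2 y1 y2) ^ 2 =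
     (cmod a ^ 2 + cmod c ^ 2) * cmod y1 ^ 2 + (cmod b ^ 2 + cmod d ^ 2) * cmod y2 ^ 2
     + 2 * Re (cnj y1 * y2 * (cnj a * b + cnj c * d))"
proof -
  have "norm (mat2 a b c d *v vec2 y1 y2) ^ 2 = cmod (a*y1 + b*y2) ^ 2 + cmod (c*y1 + d*y2) ^ 2"
    by (simp add: norm_vec2)
  also have "\<dots> = (cmod a ^ 2 + cmod c ^ 2) * cmod y1 ^ 2 + (cmod b ^ 2 + cmod d ^ 2) * cmod y2 ^ 2
      + 2 * (Re (cnj (a*y1) * (b*y2)) + Re (cnj (c*y1) * (d*y2)))"
    unfolding cmod_power2_add by (simp add: norm_mult power_mult_distrib algebra_simps)
  also have "Re (cnj (a*y1) * (b*y2)) + Re (cnj (c*y1) * (d*y2)) = Re (cnj y1 * y2 * (cnj a * b + cnj c * d))"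
    by (simp add: algebra_simps)
  finally show ?thesis .
qed

lemma cmat2_mult_scaleR: "(M :: cmat2) *v (r *\<^sub>R y) = r *\<^sub>R (M *v y)"
  by (cases M rule: mat2_cases, cases y rule: vec2_cases) (simp add: algebra_simps)

lemma cmat2_mult_smult: "(M :: cmat2) *v (c *s y) = c *s (M *v y)"
  by (cases M rule: mat2_cases, cases y rule: vec2_cases) (simp add: algebra_simps)

lemma scaleR_cmat2_mult: "(r *\<^sub>R M :: cmat2) *v y = r *\<^sub>R (M *v y)"
  by (cases M rule: mat2_cases, cases y rule: vec2_cases) (simp add: algebra_simps)

lemma scaleR_cmat2_mult_scaleR:
  fixes X Y :: cmat2
  shows "(r *\<^sub>R X) ** (s *\<^sub>R Y) = (r * s) *\<^sub>R (X ** Y)"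
  by (cases X rule: mat2_cases, cases Y rule: mat2_cases) (simp add: algebra_simps)

lemma norm_smult_vec2: "norm (c *s (y :: complex ^ 2)) = cmod c * norm y"
  by (cases y rule: vec2_cases)
    (simp add: norm_vec2 norm_mult power_mult_distrib real_sqrt_mult flip: distrib_left)

lemma cadj_mult: "cadj (X ** Y) = cadj Y ** cadj X"
  by (cases X rule: mat2_cases, cases Y rule: mat2_cases) (simp add: algebra_simps)

lemma cadj_cadj [simp]: "cadj (cadj X) = X"
  by (simp add: cadj_def vec_eq_iff)

lemma exists_unit_eigenvector: "\<exists>y l. norm y = 1 \<and> (M :: cmat2) *v y = l *s y"
proof -
  obtain p q r s where M: "M = mat2 p q r s" by (rule mat2_cases)
  show ?thesis
  proof (cases "q = 0")
    case True
    then show ?thesis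
      unfolding M by (intro exI[of _ "vec2 0 1"] exI[of _ s]) (simp add: norm_vec2)
  next
    case False
    define l where "l = (p + s + csqrt ((p + s)^2 - 4 * (p * s - q * r))) / 2"
    have "2 * l - (p + s) = csqrt ((p + s)^2 - 4 * (p * s - q * r))"
      unfolding l_def by (simp add: field_simps)
    then have "(2 * l - (p + s))^2 = (p + s)^2 - 4 * (p * s - q * r)"
      by simp
    then have "4 * (l * l - (p + s) * l + (p * s - q * r)) = 0"
      by (simp add: algebra_simps power2_eq_square)
    then have char: "l * l - (p + s) * l + (p * s - q * r) = 0"
      by (simp only: mult_eq_0_iff) simp
    define n where "n = sqrt (cmod q ^ 2 + cmod (l - p) ^ 2)"
    have "0 < n"
      unfolding n_def using False by (simp add: add_pos_nonneg)
    have n2: "n ^ 2 = cmod q ^ 2 + cmod (l - p) ^ 2"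
      unfolding n_def by simp
    define y where "y = of_real (1 / n) *s vec2 q (l - p)"
    have "norm y = 1"
      unfolding y_def norm_smult_vec2 norm_vec2 using \<open>0 < n\<close>
      by (simp add: norm_divide flip: n2)
    have "M *v vec2 q (l - p) = l *s vec2 q (l - p)"
      using char unfolding M by (simp add: algebra_simps)
    then have "M *v y = l *s y"
      unfolding y_def cmat2_mult_smult by (simp add: mult.commute)
    moreover note \<open>norm y = 1\<close>
    ultimately show ?thesis
      by blast
  qed
qed

section \<open>Unitary matrices and conjugation\<close>

text \<open>Every unitary matrix with first column \<open>w\<close> has this form, \<open>\<omega>\<close> being its determinant.\<close>
definition umat :: "complex ^ 2 \<Rightarrow> complex \<Rightarrow> cmat2" where
  "umat w \<omega> = mat2 (w $ 1) (- \<omega> * cnj (w $ 2)) (w $ 2) (\<omega> * cnj (w $ 1))"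

lemma umat_first_column: "umat w \<omega> *v vec2 1 0 = w"
  unfolding umat_def by (subst (2) vec2_expand) simp

lemma unitary2_umat:
  assumes "norm w = 1" and "cmod \<omega> = 1"
  shows "unitary2 (umat w \<omega>)"
proof -
  have w: "w $ 1 * cnj (w $ 1) + w $ 2 * cnj (w $ 2) = 1"
    using assms(1) unfolding norm_eq_1_iff_coords cmod_power2_add_eq_1_iff by (simp add: mult.commute)
  have \<omega>: "\<omega> * (cnj \<omega> * z) = z" for z
    using cnj_mult_self_unimodular[OF assms(2)] by (metis mult.assoc mult.commute mult_1)
  show ?thesis
    unfolding unitary2_def umat_def mat2_one using w by (simp add: algebra_simps \<omega>)
qed

lemma unitary2_cadj: "unitary2 U \<Longrightarrow> unitary2 (cadj U)"
  unfolding unitary2_def by simp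

lemma unitary2_cancel_right:
  assumes "unitary2 U"
  shows "X ** U ** cadj U = X" and "X ** cadj U ** U = X"
  using assms unfolding unitary2_def by (metis matrix_mul_assoc matrix_mul_rid)+

lemma unitary2_mult:
  assumes "unitary2 U" and "unitary2 V"
  shows "unitary2 (U ** V)"
  using assms unfolding unitary2_def
  by (simp add: cadj_mult matrix_mul_assoc unitary2_cancel_right[OF assms(1)] unitary2_cancel_right[OF assms(2)])

lemma unitary2_imp_normal2: "unitary2 U \<Longrightarrow> normal2 U"
  unfolding unitary2_def normal2_def by simp

lemma norm_unitary2_mult:
  assumes "unitary2 U" shows "norm (U *v y) = norm y"
proof -
  obtain a b c d where U: "U = mat2 a b c d" by (rule mat2_cases)
  obtain y1 y2 where y: "y = vec2 y1 y2" by (rule vec2_cases)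
  have "cnj a * a + cnj c * c = 1" "cnj b * b + cnj d * d = 1" "cnj a * b + cnj c * d = 0"
    using assms unfolding unitary2_def U mat2_one by simp_all
  then have "cmod a ^ 2 + cmod c ^ 2 = 1" "cmod b ^ 2 + cmod d ^ 2 = 1" "cnj a * b + cnj c * d = 0"
    by (simp_all add: cmod_power2_add_eq_1_iff)
  then have "norm (U *v y) ^ 2 = norm y ^ 2"
    unfolding U y norm_mat2_mult_vec2_power2 by (simp add: norm_vec2)
  then show ?thesis by (simp add: power2_eq_iff_nonneg)
qed

lemma conj_unitary2_cancel:
  "unitary2 U \<Longrightarrow> U ** (cadj U ** A ** U) ** cadj U = A"
  by (simp add: matrix_mul_assoc unitary2_cancel_right unitary2_def)

lemma conj_unitary2_mult:
  "unitary2 U \<Longrightarrow> (cadj U ** A ** U) ** (cadj U ** B ** U) = cadj U ** (A ** B) ** U"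
  by (simp add: matrix_mul_assoc unitary2_cancel_right)

lemma conj_unitary2_mult_vec:
  assumes "unitary2 U" shows "A *v (U *v y) = U *v ((cadj U ** A ** U) *v y)"
proof -
  have "U *v ((cadj U ** A ** U) *v y) = (U ** cadj U) ** A ** U *v y"
    by (simp add: matrix_vector_mul_assoc matrix_mul_assoc)
  then show ?thesis
    using assms unfolding unitary2_def by (simp add: matrix_vector_mul_assoc)
qed

lemma commute_iff_conj_commute:
  assumes "unitary2 U"
  shows "A ** B = B ** A \<longleftrightarrow>
    (cadj U ** A ** U) ** (cadj U ** B ** U) = (cadj U ** B ** U) ** (cadj U ** A ** U)"
  unfolding conj_unitary2_mult[OF assms] by (metis conj_unitary2_cancel[OF assms])

lemma conj_scaleR: "cadj U ** (r *\<^sub>R A) ** U = r *\<^sub>R (cadj U ** A ** U)"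
  by (simp add: matrix_scalar_ac scalar_matrix_assoc)

lemma conj_conj: "cadj (U ** V) ** A ** (U ** V) = cadj V ** (cadj U ** A ** U) ** V"
  by (simp add: cadj_mult matrix_mul_assoc)

lemma normal2_conj:
  assumes "unitary2 U" and "normal2 A"
  shows "normal2 (cadj U ** A ** U)"
proof -
  have "cadj (cadj U ** A ** U) = cadj U ** cadj A ** U"
    by (simp add: cadj_mult matrix_mul_assoc)
  then show ?thesis
    using assms unfolding normal2_def by (simp add: conj_unitary2_mult)
qed

lemma normal2_mat2_offdiag:
  assumes "normal2 (mat2 a b c d)" shows "cmod b = cmod c"
proof -
  have "(mat2 a b c d ** cadj (mat2 a b c d)) $ 1 $ 1 = (cadj (mat2 a b c d) ** mat2 a b c d) $ 1 $ 1"
    using assms unfolding normal2_def by simp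
  then have "cnj b * b = cnj c * c"
    by (simp add: mult.commute)
  then have "cmod b ^ 2 = cmod c ^ 2"
    by (metis of_real_cmod_power2 of_real_eq_iff)
  then show ?thesis
    by (simp add: power2_eq_iff_nonneg)
qed

lemma umat_commute_imp_eq:
  assumes "w $ 2 \<noteq> 0" and "umat w \<omega>1 ** umat w \<omega>2 = umat w \<omega>2 ** umat w \<omega>1"
  shows "\<omega>1 = \<omega>2"
proof -
  have "(umat w \<omega>1 ** umat w \<omega>2) $ 1 $ 1 = (umat w \<omega>2 ** umat w \<omega>1) $ 1 $ 1"
    using assms(2) by simp
  then have "(\<omega>1 - \<omega>2) * (cnj (w $ 2) * w $ 2) = 0"
    unfolding umat_def by (auto simp: algebra_simps)
  then show ?thesis
    using assms(1) by auto
qed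

section \<open>The operator norm\<close>

lemma norm_mult_le_opnorm2: "norm (A *v y) \<le> opnorm2 A * norm y"
  unfolding opnorm2_def by (rule onorm) simp

lemma opnorm2_le: "(\<And>y. norm (A *v y) \<le> c * norm y) \<Longrightarrow> opnorm2 A \<le> c"
  unfolding opnorm2_def by (rule onorm_le)

lemma opnorm2_triangle: "opnorm2 (A + B) \<le> opnorm2 A + opnorm2 B"
  unfolding opnorm2_def matrix_vector_mult_add_rdistrib
  by (rule onorm_triangle) simp_all

lemma opnorm2_conj_le:
  assumes "unitary2 U" shows "opnorm2 (cadj U ** A ** U) \<le> opnorm2 A"
proof (rule opnorm2_le)
  fix y
  have "norm ((cadj U ** A ** U) *v y) = norm (cadj U *v (A *v (U *v y)))"
    by (simp add: matrix_vector_mul_assoc matrix_mul_assoc)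
  also have "\<dots> = norm (A *v (U *v y))"
    using assms by (simp add: norm_unitary2_mult unitary2_cadj)
  also have "\<dots> \<le> opnorm2 A * norm y"
    using norm_mult_le_opnorm2[of A "U *v y"] assms by (simp add: norm_unitary2_mult)
  finally show "norm ((cadj U ** A ** U) *v y) \<le> opnorm2 A * norm y" .
qed

lemma opnorm2_conj:
  assumes "unitary2 U" shows "opnorm2 (cadj U ** A ** U) = opnorm2 A"
proof (rule antisym)
  have "opnorm2 (cadj (cadj U) ** (cadj U ** A ** U) ** cadj U) \<le> opnorm2 (cadj U ** A ** U)"
    using assms by (intro opnorm2_conj_le unitary2_cadj)
  then show "opnorm2 A \<le> opnorm2 (cadj U ** A ** U)"
    using conj_unitary2_cancel[OF assms] by simp
qed (rule opnorm2_conj_le[OF assms])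

lemma opnorm2_scaleR_unitary2_le:
  assumes "unitary2 W" and "0 \<le> r"
  shows "opnorm2 (r *\<^sub>R W) \<le> r"
  by (rule opnorm2_le) (use assms in \<open>simp add: scaleR_cmat2_mult norm_unitary2_mult\<close>)

lemma opnorm2_mat2_le:
  assumes "0 \<le> r" and "cmod a ^ 2 + cmod c ^ 2 \<le> r ^ 2" and "cmod b ^ 2 + cmod d ^ 2 \<le> r ^ 2"
    and "cnj a * b + cnj c * d = 0"
  shows "opnorm2 (mat2 a b c d) \<le> r"
proof (rule opnorm2_le)
  fix y :: "complex ^ 2"
  obtain y1 y2 where y: "y = vec2 y1 y2" by (rule vec2_cases)
  have "norm (mat2 a b c d *v y) ^ 2 \<le> r ^ 2 * (cmod y1 ^ 2 + cmod y2 ^ 2)"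
    unfolding y norm_mat2_mult_vec2_power2 assms(4)
    using mult_right_mono[OF assms(2), of "cmod y1 ^ 2"] mult_right_mono[OF assms(3), of "cmod y2 ^ 2"]
    by (simp add: distrib_left)
  also have "\<dots> = (r * norm y) ^ 2"
    unfolding y norm_vec2 by (simp add: power_mult_distrib)
  finally show "norm (mat2 a b c d *v y) \<le> r * norm y"
    using assms(1) by (simp add: power2_le_iff_abs_le)
qed

lemma opnorm2_attained: "\<exists>x. norm x = 1 \<and> norm (A *v x) = opnorm2 A"
proof -
  have "continuous_on (sphere 0 1) (\<lambda>x :: complex ^ 2. norm (A *v x))"
    by (intro continuous_intros linear_continuous_on) simp
  moreover have "sphere (0 :: complex ^ 2) 1 \<noteq> {}"
    by simp
  ultimately obtain x where x: "x \<in> sphere 0 1" and max: "\<forall>y \<in> sphere 0 1. norm (A *v y) \<le> norm (A *v x)"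
    using continuous_attains_sup[OF compact_sphere] by blast
  have "opnorm2 A \<le> norm (A *v x)"
  proof (rule opnorm2_le)
    fix y :: "complex ^ 2"
    show "norm (A *v y) \<le> norm (A *v x) * norm y"
    proof (cases "y = 0")
      case False
      then have "norm (A *v ((1 / norm y) *\<^sub>R y)) \<le> norm (A *v x)"
        using max by simp
      then have "norm (A *v y) / norm y \<le> norm (A *v x)"
        by (simp add: cmat2_mult_scaleR)
      with False show ?thesis
        by (simp add: divide_le_eq)
    qed simp
  qed
  moreover have "norm (A *v x) \<le> opnorm2 A"
    using norm_mult_le_opnorm2[of A x] x by simp
  ultimately show ?thesis
    using x by (intro exI[of _ x]) simp
qed

lemma opnorm2_pos:
  assumes "A \<noteq> 0" shows "opnorm2 A > 0"
proof (rule ccontr)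
  assume "\<not> opnorm2 A > 0"
  then have zero: "A *v y = 0" for y
    using norm_mult_le_opnorm2[of A y] mult_nonpos_nonneg[of "opnorm2 A" "norm y"]
    by (simp del: norm_le_zero_iff add: norm_le_zero_iff[symmetric])
  have "A = 0"
    using zero[of "vec2 1 0"] zero[of "vec2 0 1"]
    by (cases A rule: mat2_cases) (simp add: mat2_zero vec_eq_iff forall_2)
  with assms show False ..
qed

section \<open>Common extremal vectors\<close>

lemma opnorm2_add_eq_if_common_extremal:
  assumes "norm x = 1" and "A *v x = a *\<^sub>R u" and "B *v x = b *\<^sub>R u" and "norm u = 1"
    and "0 \<le> a" and "0 \<le> b" and "opnorm2 A \<le> a" and "opnorm2 B \<le> b"
  shows "opnorm2 (A + B) = opnorm2 A + opnorm2 B"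
proof -
  have "a + b = norm ((A + B) *v x)"
    using assms(2-6) by (simp add: matrix_vector_mult_add_rdistrib flip: scaleR_add_left)
  also have "\<dots> \<le> opnorm2 (A + B)"
    using norm_mult_le_opnorm2[of "A + B" x] assms(1) by simp
  finally show ?thesis
    using opnorm2_triangle[of A B] assms(7,8) by linarith
qed

lemma opnorm2_add_eq_if_conj_common_column:
  assumes "unitary2 U" and "norm v = 1" and "0 \<le> a" and "0 \<le> b"
    and "(cadj U ** A ** U) *v vec2 1 0 = a *\<^sub>R v" and "(cadj U ** B ** U) *v vec2 1 0 = b *\<^sub>R v"
    and "opnorm2 (cadj U ** A ** U) \<le> a" and "opnorm2 (cadj U ** B ** U) \<le> b"
  shows "opnorm2 (A + B) = opnorm2 A + opnorm2 B"
proof -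
  have "norm (U *v vec2 1 0) = 1" and "norm (U *v v) = 1"
    using assms(1,2) by (simp_all add: norm_unitary2_mult norm_vec2)
  moreover have "A *v (U *v vec2 1 0) = a *\<^sub>R (U *v v)" and "B *v (U *v vec2 1 0) = b *\<^sub>R (U *v v)"
    using assms(1,5,6) by (simp_all add: conj_unitary2_mult_vec cmat2_mult_scaleR)
  moreover have "opnorm2 A \<le> a" and "opnorm2 B \<le> b"
    using assms(1,7,8) by (simp_all add: opnorm2_conj)
  ultimately show ?thesis
    using assms(3,4) by (blast intro: opnorm2_add_eq_if_common_extremal)
qed

lemma common_extremal_if_opnorm2_add_eq:
  assumes "A \<noteq> 0" and "opnorm2 (A + B) = opnorm2 A + opnorm2 B"
  obtains x u where "norm x = 1" and "norm u = 1"
    and "A *v x = opnorm2 A *\<^sub>R u" and "B *v x = opnorm2 B *\<^sub>R u"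
proof -
  let ?a = "opnorm2 A" and ?b = "opnorm2 B"
  obtain x where x: "norm x = 1" and max: "norm ((A + B) *v x) = opnorm2 (A + B)"
    using opnorm2_attained by blast
  have "norm (A *v x) \<le> ?a" and "norm (B *v x) \<le> ?b"
    using norm_mult_le_opnorm2[of A x] norm_mult_le_opnorm2[of B x] x by simp_all
  moreover have "norm (A *v x + B *v x) = ?a + ?b"
    using max assms(2) by (simp add: matrix_vector_mult_add_rdistrib)
  moreover note norm_triangle_ineq[of "A *v x" "B *v x"]
  ultimately have na: "norm (A *v x) = ?a" and nb: "norm (B *v x) = ?b"
    by linarith+
  with \<open>norm (A *v x + B *v x) = ?a + ?b\<close> have parallel: "?a *\<^sub>R (B *v x) = ?b *\<^sub>R (A *v x)"
    using norm_triangle_eq[of "A *v x" "B *v x"] by simp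
  have a0: "?a > 0"
    using assms(1) by (rule opnorm2_pos)
  define u where "u = (1 / ?a) *\<^sub>R (A *v x)"
  show thesis
  proof
    show "norm x = 1" by (fact x)
    show "norm u = 1"
      unfolding u_def using na a0 by simp
    show "A *v x = ?a *\<^sub>R u"
      unfolding u_def using a0 by simp
    have "B *v x = (1 / ?a) *\<^sub>R (?a *\<^sub>R (B *v x))"
      using a0 by simp
    then show "B *v x = ?b *\<^sub>R u"
      unfolding parallel u_def by simp
  qed
qed

text \<open>If the first column has the maximal length \<open>r\<close>, tilting \<open>e\<^sub>1\<close> slightly towards the
  direction in which the second column correlates with the first one would lengthen the image
  beyond \<open>r\<close>; hence the columns are orthogonal.\<close>
lemma opnorm2_extremal_column_orthogonal:
  assumes "0 < r" and "cmod a ^ 2 + cmod c ^ 2 = r ^ 2" and "opnorm2 (mat2 a b c d) \<le> r"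
  shows "cnj a * b + cnj c * d = 0"
proof -
  define k where "k = cnj a * b + cnj c * d"
  define s where "s = 1 / r ^ 2"
  define y where "y = vec2 1 (of_real s * cnj k)"
  have s: "0 < s" "r ^ 2 * s = 1"
    unfolding s_def using assms(1) by simp_all
  have "Re (cnj 1 * (of_real s * cnj k) * k) = s * cmod k ^ 2"
    by (simp flip: of_real_cmod_power2 add: mult.assoc)
  then have "norm (mat2 a b c d *v y) ^ 2
      = r ^ 2 + (cmod b ^ 2 + cmod d ^ 2) * (s ^ 2 * cmod k ^ 2) + 2 * (s * cmod k ^ 2)"
    unfolding y_def norm_mat2_mult_vec2_power2 assms(2) k_def[symmetric]
    by (simp add: norm_mult power_mult_distrib)
  moreover have "norm (mat2 a b c d *v y) ^ 2 \<le> (r * norm y) ^ 2"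
    using norm_mult_le_opnorm2[of "mat2 a b c d" y] assms(1,3)
    by (meson mult_right_mono norm_ge_zero order_trans power_mono)
  moreover have "(r * norm y) ^ 2 = r ^ 2 + (r ^ 2 * s) * (s * cmod k ^ 2)"
    unfolding y_def norm_vec2 power_mult_distrib
    by (simp add: norm_mult power_mult_distrib algebra_simps power2_eq_square)
  moreover have "0 \<le> (cmod b ^ 2 + cmod d ^ 2) * (s ^ 2 * cmod k ^ 2)"
    by simp
  ultimately have "s * cmod k ^ 2 \<le> 0"
    unfolding s(2) by linarith
  then show ?thesis
    unfolding k_def[symmetric] using s(1) by (simp add: mult_le_0_iff)
qed

lemma normal2_extremal_first_column:
  assumes "0 < a" and "norm w = 1" and "normal2 M" and "opnorm2 M \<le> a"
    and "M *v vec2 1 0 = a *\<^sub>R w"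
  shows "w $ 2 = 0 \<and> (\<exists>q. cmod q \<le> a \<and> M = mat2 (of_real a * w $ 1) 0 0 q)
    \<or> w $ 2 \<noteq> 0 \<and> (\<exists>\<omega>. cmod \<omega> = 1 \<and> M = a *\<^sub>R umat w \<omega>)"
proof -
  obtain p q where M: "M = mat2 (of_real a * w $ 1) p (of_real a * w $ 2) q"
    using assms(5) unfolding mat2_first_column scaleR_vec_eq vec2_eq_iff by (metis mat2_expand)
  have w: "cmod (w $ 1) ^ 2 + cmod (w $ 2) ^ 2 = 1"
    using assms(2) by (simp add: norm_eq_1_iff_coords)
  have p: "cmod p = a * cmod (w $ 2)"
    using normal2_mat2_offdiag[OF assms(3)[unfolded M]] assms(1) by (simp add: norm_mult)
  have col1: "cmod (of_real a * w $ 1) ^ 2 + cmod (of_real a * w $ 2) ^ 2 = a ^ 2"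
    using w by (simp add: norm_mult power_mult_distrib flip: distrib_left)
  have "of_real a * (cnj (w $ 1) * p + cnj (w $ 2) * q) = 0"
    using opnorm2_extremal_column_orthogonal[OF assms(1) col1 assms(4)[unfolded M]]
    by (simp add: algebra_simps)
  then have orth: "cnj (w $ 1) * p + cnj (w $ 2) * q = 0"
    using assms(1) by simp
  show ?thesis
  proof (cases "w $ 2 = 0")
    case True
    have "cmod q = norm (M *v vec2 0 1)"
      using True p unfolding M by (simp add: norm_vec2)
    also have "\<dots> \<le> a"
      using norm_mult_le_opnorm2[of M "vec2 0 1"] assms(4) by (simp add: norm_vec2)
    finally show ?thesis
      using True p M by auto
  next
    case False
    define \<omega> where "\<omega> = - p / (of_real a * cnj (w $ 2))"
    have "of_real a * cnj (w $ 2) \<noteq> 0"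
      using False assms(1) by simp
    then have "p = - \<omega> * of_real a * cnj (w $ 2)" and "q = \<omega> * of_real a * cnj (w $ 1)"
      using orth False unfolding \<omega>_def by (auto simp: field_simps eq_neg_iff_add_eq_0)
    moreover have "cmod \<omega> = 1"
      unfolding \<omega>_def using p False assms(1) by (simp add: norm_divide norm_mult)
    ultimately show ?thesis
      using False unfolding M umat_def by (auto simp: algebra_simps)
  qed
qed

lemma unitary2_conj_extremal_cases:
  assumes "unitary2 U" and "normal2 A" and "0 < a" and "opnorm2 A \<le> a"
    and "A *v (U *v vec2 1 0) = a *\<^sub>R u" and "norm u = 1"
  defines "w \<equiv> cadj U *v u"
  shows "w $ 2 = 0 \<and> (\<exists>q. cmod q \<le> a \<and> cadj U ** A ** U = mat2 (of_real a * w $ 1) 0 0 q)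
    \<or> w $ 2 \<noteq> 0 \<and> (\<exists>\<omega>. cmod \<omega> = 1 \<and> cadj U ** A ** U = a *\<^sub>R umat w \<omega>)"
proof (rule normal2_extremal_first_column)
  show "norm w = 1"
    unfolding w_def using assms(1,6) by (simp add: norm_unitary2_mult unitary2_cadj)
  show "normal2 (cadj U ** A ** U)"
    using assms(1,2) by (rule normal2_conj)
  show "opnorm2 (cadj U ** A ** U) \<le> a"
    using assms(1,4) by (simp add: opnorm2_conj)
  show "(cadj U ** A ** U) *v vec2 1 0 = a *\<^sub>R w"
    unfolding w_def using assms(5)
    by (simp add: cmat2_mult_scaleR flip: matrix_vector_mul_assoc)
qed (fact assms(3))

section \<open>Normal forms of aligned and skew-aligned pairs\<close>

lemma aligned_iff_diagonal:
  "aligned A B \<longleftrightarrow> (\<exists>U r1 r2 \<zeta> q1 q2. unitary2 U \<and> 0 < r1 \<and> 0 < r2 \<and> cmod \<zeta> = 1 \<and>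
     cmod q1 \<le> r1 \<and> cmod q2 \<le> r2 \<and>
     cadj U ** A ** U = mat2 (of_real r1 * \<zeta>) 0 0 q1 \<and> cadj U ** B ** U = mat2 (of_real r2 * \<zeta>) 0 0 q2)"
  (is "_ \<longleftrightarrow> ?diag")
proof
  assume "aligned A B"
  then obtain U r1 r2 \<eta> t1 t2 where "unitary2 U" "0 < r1" "0 < r2" "cmod t1 \<le> 1" "cmod t2 \<le> 1"
    and "cadj U ** A ** U = mat2 (of_real r1 * cis \<eta>) 0 0 (of_real r1 * cis \<eta> * t1)"
    and "cadj U ** B ** U = mat2 (of_real r2 * cis \<eta>) 0 0 (of_real r2 * cis \<eta> * t2)"
    unfolding aligned_def by blast
  moreover have "cmod (of_real r1 * cis \<eta> * t1) \<le> r1" and "cmod (of_real r2 * cis \<eta> * t2) \<le> r2"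
    using calculation by (simp_all add: norm_mult mult_left_le)
  ultimately show ?diag
    by (metis norm_cis)
next
  assume ?diag
  then obtain U r1 r2 \<zeta> q1 q2 where "unitary2 U" "0 < r1" "0 < r2" "cmod \<zeta> = 1"
    and "cmod q1 \<le> r1" "cmod q2 \<le> r2"
    and "cadj U ** A ** U = mat2 (of_real r1 * \<zeta>) 0 0 q1"
    and "cadj U ** B ** U = mat2 (of_real r2 * \<zeta>) 0 0 q2"
    by blast
  moreover have "\<zeta> \<noteq> 0"
    using \<open>cmod \<zeta> = 1\<close> by auto
  ultimately show "aligned A B"
    unfolding aligned_def
    by (intro exI[of _ U] exI[of _ r1] exI[of _ r2] exI[of _ "Arg2pi \<zeta>"]
        exI[of _ "q1 / (of_real r1 * \<zeta>)"] exI[of _ "q2 / (of_real r2 * \<zeta>)"])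
      (simp add: cis_Arg2pi Arg2pi_ge_0 Arg2pi_lt_2pi norm_divide norm_mult)
qed

lemma skew_form_eq_umat:
  fixes r t \<eta> \<theta> :: real
  shows "mat2 (of_real r * cis \<eta> * cos t) (- of_real r * cis \<theta> * sin t)
        (of_real r * cis \<eta> * sin t) (of_real r * cis \<theta> * cos t)
   = r *\<^sub>R umat (vec2 (cis \<eta> * cos t) (cis \<eta> * sin t)) (cis \<eta> * cis \<theta>)"
proof -
  have "cis \<eta> * cnj (cis \<eta>) = 1"
    by (simp add: cis_cnj cis_mult)
  then show ?thesis
    unfolding umat_def by (simp add: algebra_simps)
qed

lemma umat_diagonal_conj:
  assumes "cmod \<delta> = 1"
  shows "cadj (mat2 1 0 0 \<delta>) ** umat w \<omega> ** mat2 1 0 0 \<delta> = umat (vec2 (w $ 1) (cnj \<delta> * w $ 2)) \<omega>"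
proof -
  have "cnj \<delta> * \<delta> = 1"
    using assms by (rule cnj_mult_self_unimodular)
  then show ?thesis
    unfolding umat_def by (simp add: algebra_simps)
qed

text \<open>A diagonal unitary change of basis makes the two coordinates of \<open>w\<close> have the same phase.\<close>
lemma umat_phase_normal_form:
  assumes "norm w = 1" and "w $ 2 \<noteq> 0"
  obtains D \<eta> t where "unitary2 D" and "0 \<le> \<eta>" and "\<eta> < 2 * pi" and "0 < t" and "t < pi"
    and "\<And>\<omega>. cadj D ** umat w \<omega> ** D = umat (vec2 (cis \<eta> * cos t) (cis \<eta> * sin t)) \<omega>"
proof -
  define n1 n2 where "n1 = cmod (w $ 1)" and "n2 = cmod (w $ 2)"
  have n12: "n1 ^ 2 + n2 ^ 2 = 1" and n2: "0 < n2"
    using assms unfolding n1_def n2_def norm_eq_1_iff_coords by simp_all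
  then have "n1 ^ 2 < 1"
    by (smt (verit) zero_less_power)
  then have n1: "0 \<le> n1" "n1 < 1"
    unfolding n1_def by (simp_all add: abs_square_less_1)
  define e where "e = (if w $ 1 = 0 then 1 else w $ 1 / of_real n1)"
  have e: "cmod e = 1" and w1: "w $ 1 = of_real n1 * e"
    unfolding e_def n1_def by (auto simp: norm_divide)
  define \<delta> where "\<delta> = w $ 2 / (of_real n2 * e)"
  have \<delta>: "cmod \<delta> = 1" and w2: "w $ 2 = \<delta> * (of_real n2 * e)"
    unfolding \<delta>_def using e n2 by (auto simp: norm_divide norm_mult n2_def)
  have "cnj \<delta> * w $ 2 = of_real n2 * e"
    unfolding w2 using cnj_mult_self_unimodular[OF \<delta>] by (simp add: mult.assoc[symmetric])
  define t where "t = arccos n1"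
  have t: "cos t = n1" "sin t = n2" "0 < t" "t < pi"
    unfolding t_def using n1 n12 n2 arccos_lt_bounded[of n1]
    by (auto simp: sin_arccos real_sqrt_unique)
  show thesis
  proof
    show "unitary2 (mat2 1 0 0 \<delta>)"
      using cnj_mult_self_unimodular[OF \<delta>] unfolding unitary2_def mat2_one by (simp add: mult.commute)
    show "cadj (mat2 1 0 0 \<delta>) ** umat w \<omega> ** mat2 1 0 0 \<delta>
        = umat (vec2 (cis (Arg2pi e) * cos t) (cis (Arg2pi e) * sin t)) \<omega>" for \<omega>
      unfolding umat_diagonal_conj[OF \<delta>] cis_Arg2pi[OF e] t(1,2) w1 \<open>cnj \<delta> * w $ 2 = of_real n2 * e\<close>
      by (simp add: mult.commute)
  qed (use t Arg2pi_ge_0 Arg2pi_lt_2pi in auto)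
qed

lemma skew_aligned_if_conj_umat:
  assumes U: "unitary2 U" and r: "0 < r1" "0 < r2" and w: "norm w = 1" "w $ 2 \<noteq> 0"
    and \<omega>: "cmod \<omega>1 = 1" "cmod \<omega>2 = 1" "\<omega>1 \<noteq> \<omega>2"
    and A: "cadj U ** A ** U = r1 *\<^sub>R umat w \<omega>1" and B: "cadj U ** B ** U = r2 *\<^sub>R umat w \<omega>2"
  shows "skew_aligned A B"
proof -
  obtain D \<eta> t where D: "unitary2 D" and \<eta>: "0 \<le> \<eta>" "\<eta> < 2 * pi" and t: "0 < t" "t < pi"
    and normal_form: "\<And>\<omega>. cadj D ** umat w \<omega> ** D = umat (vec2 (cis \<eta> * cos t) (cis \<eta> * sin t)) \<omega>"
    using umat_phase_normal_form[OF w] by blast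
  have rotate: "cis \<eta> * cis (Arg2pi (cnj (cis \<eta>) * \<omega>)) = \<omega>" if "cmod \<omega> = 1" for \<omega>
    using that cnj_mult_self_unimodular[of "cis \<eta>"]
    by (simp add: cis_Arg2pi norm_mult mult.assoc[symmetric] mult.commute[of "cis \<eta>"])
  define \<theta> \<phi> where "\<theta> = Arg2pi (cnj (cis \<eta>) * \<omega>1)" and "\<phi> = Arg2pi (cnj (cis \<eta>) * \<omega>2)"
  have "\<phi> \<noteq> \<theta>"
    using rotate[OF \<omega>(1)] rotate[OF \<omega>(2)] \<omega>(3) unfolding \<theta>_def \<phi>_def by metis
  moreover have "cadj (U ** D) ** A ** (U ** D) = r1 *\<^sub>R umat (vec2 (cis \<eta> * cos t) (cis \<eta> * sin t)) (cis \<eta> * cis \<theta>)"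
    unfolding conj_conj A conj_scaleR normal_form \<theta>_def rotate[OF \<omega>(1)] ..
  moreover have "cadj (U ** D) ** B ** (U ** D) = r2 *\<^sub>R umat (vec2 (cis \<eta> * cos t) (cis \<eta> * sin t)) (cis \<eta> * cis \<phi>)"
    unfolding conj_conj B conj_scaleR normal_form \<phi>_def rotate[OF \<omega>(2)] ..
  ultimately show "skew_aligned A B"
    unfolding skew_aligned_def skew_form_eq_umat
    using unitary2_mult[OF U D] r \<eta> t Arg2pi_ge_0 Arg2pi_lt_2pi unfolding \<theta>_def \<phi>_def by blast
qed

lemma skew_aligned_iff_umat:
  "skew_aligned A B \<longleftrightarrow> (\<exists>U r1 r2 w \<omega>1 \<omega>2. unitary2 U \<and> 0 < r1 \<and> 0 < r2 \<and>
     norm w = 1 \<and> w $ 2 \<noteq> 0 \<and> cmod \<omega>1 = 1 \<and> cmod \<omega>2 = 1 \<and> \<omega>1 \<noteq> \<omega>2 \<and>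
     cadj U ** A ** U = r1 *\<^sub>R umat w \<omega>1 \<and> cadj U ** B ** U = r2 *\<^sub>R umat w \<omega>2)"
  (is "_ \<longleftrightarrow> ?umat")
proof
  assume "skew_aligned A B"
  then obtain U r1 r2 t \<eta> \<theta> \<phi> where U: "unitary2 U" and r: "0 < r1" "0 < r2"
    and t: "0 < t" "t < pi" and angles: "0 \<le> \<theta>" "\<theta> < 2 * pi" "0 \<le> \<phi>" "\<phi> < 2 * pi" "\<phi> \<noteq> \<theta>"
    and "cadj U ** A ** U = r1 *\<^sub>R umat (vec2 (cis \<eta> * cos t) (cis \<eta> * sin t)) (cis \<eta> * cis \<theta>)"
    and "cadj U ** B ** U = r2 *\<^sub>R umat (vec2 (cis \<eta> * cos t) (cis \<eta> * sin t)) (cis \<eta> * cis \<phi>)"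
    unfolding skew_aligned_def skew_form_eq_umat by blast
  moreover have "norm (vec2 (cis \<eta> * cos t) (cis \<eta> * sin t)) = 1"
    by (simp add: norm_vec2 norm_mult)
  moreover have "vec2 (cis \<eta> * cos t) (cis \<eta> * sin t) $ 2 \<noteq> 0"
    using sin_gt_zero[OF t] by simp
  moreover have "cis \<eta> * cis \<theta> \<noteq> cis \<eta> * cis \<phi>"
    using angles Arg2pi_cis by (metis cis_neq_zero mult_left_cancel)
  moreover have "cmod (cis \<eta> * cis \<theta>) = 1" and "cmod (cis \<eta> * cis \<phi>) = 1"
    by (simp_all add: norm_mult)
  ultimately show ?umat
    by blast
qed (blast intro: skew_aligned_if_conj_umat)

section \<open>Norm additivity\<close>

lemma aligned_imp_opnorm2_add_eq:
  assumes "aligned A B" shows "opnorm2 (A + B) = opnorm2 A + opnorm2 B"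
proof -
  obtain U r1 r2 \<zeta> q1 q2 where U: "unitary2 U" and r: "0 < r1" "0 < r2" and \<zeta>: "cmod \<zeta> = 1"
    and q: "cmod q1 \<le> r1" "cmod q2 \<le> r2"
    and A: "cadj U ** A ** U = mat2 (of_real r1 * \<zeta>) 0 0 q1"
    and B: "cadj U ** B ** U = mat2 (of_real r2 * \<zeta>) 0 0 q2"
    using assms unfolding aligned_iff_diagonal by blast
  have bound: "opnorm2 (mat2 (of_real r * \<zeta>) 0 0 q) \<le> r" if "0 < r" "cmod q \<le> r" for r q
    using that \<zeta> by (intro opnorm2_mat2_le) (simp_all add: norm_mult power_mono)
  show ?thesis
    by (rule opnorm2_add_eq_if_conj_common_column[OF U, where v = "vec2 \<zeta> 0"])
      (use r \<zeta> bound[OF r(1) q(1)] bound[OF r(2) q(2)] in \<open>simp_all add: A B norm_vec2\<close>)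
qed

lemma aligned_imp_commute:
  assumes "aligned A B" shows "A ** B = B ** A"
proof -
  obtain U r1 r2 \<zeta> q1 q2 where U: "unitary2 U"
    and "cadj U ** A ** U = mat2 (of_real r1 * \<zeta>) 0 0 q1"
    and "cadj U ** B ** U = mat2 (of_real r2 * \<zeta>) 0 0 q2"
    using assms unfolding aligned_iff_diagonal by blast
  then show ?thesis
    unfolding commute_iff_conj_commute[OF U, of A B] by (simp add: mult.commute)
qed

lemma skew_aligned_imp_opnorm2_add_eq:
  assumes "skew_aligned A B" shows "opnorm2 (A + B) = opnorm2 A + opnorm2 B"
proof -
  obtain U r1 r2 w \<omega>1 \<omega>2 where U: "unitary2 U" and r: "0 < r1" "0 < r2" and w: "norm w = 1"
    and \<omega>: "cmod \<omega>1 = 1" "cmod \<omega>2 = 1"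
    and A: "cadj U ** A ** U = r1 *\<^sub>R umat w \<omega>1" and B: "cadj U ** B ** U = r2 *\<^sub>R umat w \<omega>2"
    using assms unfolding skew_aligned_iff_umat by blast
  show ?thesis
    by (rule opnorm2_add_eq_if_conj_common_column[OF U w, where a = r1 and b = r2])
      (use r w \<omega> in \<open>simp_all add: A B scaleR_cmat2_mult umat_first_column
        opnorm2_scaleR_unitary2_le unitary2_umat\<close>)
qed

lemma skew_aligned_imp_not_commute:
  assumes "skew_aligned A B" shows "A ** B \<noteq> B ** A"
proof
  assume commute: "A ** B = B ** A"
  obtain U r1 r2 w \<omega>1 \<omega>2 where U: "unitary2 U" and r: "0 < r1" "0 < r2" and "w $ 2 \<noteq> 0" "\<omega>1 \<noteq> \<omega>2"
    and "cadj U ** A ** U = r1 *\<^sub>R umat w \<omega>1" and "cadj U ** B ** U = r2 *\<^sub>R umat w \<omega>2"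
    using assms unfolding skew_aligned_iff_umat by blast
  with commute have "(r1 * r2) *\<^sub>R (umat w \<omega>1 ** umat w \<omega>2) = (r2 * r1) *\<^sub>R (umat w \<omega>2 ** umat w \<omega>1)"
    unfolding commute_iff_conj_commute[OF U, of A B] by (simp add: scaleR_cmat2_mult_scaleR)
  with r have "umat w \<omega>1 ** umat w \<omega>2 = umat w \<omega>2 ** umat w \<omega>1"
    by (simp add: mult.commute)
  with \<open>w $ 2 \<noteq> 0\<close> \<open>\<omega>1 \<noteq> \<omega>2\<close> show False
    using umat_commute_imp_eq by blast
qed

lemma aligned_if_conj_equal_umat:
  assumes "unitary2 U" and "0 < a" and "0 < b" and "norm w = 1" and "cmod \<omega> = 1"
    and A: "cadj U ** A ** U = a *\<^sub>R umat w \<omega>" and B: "cadj U ** B ** U = b *\<^sub>R umat w \<omega>"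
  shows "aligned A B"
proof -
  let ?W = "umat w \<omega>"
  have W: "unitary2 ?W"
    using assms(4,5) by (rule unitary2_umat)
  obtain y l where y: "norm y = 1" and eigen: "?W *v y = l *s y"
    using exists_unit_eigenvector by blast
  have l: "cmod l = 1"
    using norm_unitary2_mult[OF W, of y] y unfolding eigen norm_smult_vec2 by simp
  let ?Y = "umat y 1"
  have Y: "unitary2 ?Y"
    using y by (simp add: unitary2_umat)
  have "cadj ?Y *v y = cadj ?Y *v (?Y *v vec2 1 0)"
    by (simp add: umat_first_column)
  also have "\<dots> = vec2 1 0"
    using Y unfolding unitary2_def by (simp add: matrix_vector_mul_assoc)
  finally have z: "cadj ?Y *v (l *s y) = vec2 l 0"
    by (simp add: cmat2_mult_smult)
  \<comment> \<open>A unimodular eigenvector of \<open>?W\<close> is extremal, so the first-column reduction diagonalises \<open>?W\<close>.\<close>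
  have "?W *v (?Y *v vec2 1 0) = 1 *\<^sub>R (l *s y)"
    by (simp add: umat_first_column eigen)
  moreover have "norm (l *s y) = 1"
    using l y by (simp add: norm_smult_vec2)
  moreover have "opnorm2 ?W \<le> 1"
    using opnorm2_scaleR_unitary2_le[OF W zero_le_one] by simp
  ultimately obtain q where q: "cmod q \<le> 1" and diag: "cadj ?Y ** ?W ** ?Y = mat2 l 0 0 q"
    using unitary2_conj_extremal_cases[OF Y unitary2_imp_normal2[OF W] zero_less_one] z by auto
  have "cadj (U ** ?Y) ** A ** (U ** ?Y) = mat2 (of_real a * l) 0 0 (of_real a * q)"
    and "cadj (U ** ?Y) ** B ** (U ** ?Y) = mat2 (of_real b * l) 0 0 (of_real b * q)"
    unfolding conj_conj A B conj_scaleR diag by simp_all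
  moreover have "cmod (of_real a * q) \<le> a" and "cmod (of_real b * q) \<le> b"
    using assms(2,3) q by (simp_all add: norm_mult mult_left_le)
  ultimately show ?thesis
    unfolding aligned_iff_diagonal using unitary2_mult[OF assms(1) Y] assms(2,3) l by blast
qed

lemma aligned_or_skew_aligned_if_opnorm2_add_eq:
  assumes "A \<noteq> 0" and "B \<noteq> 0" and "normal2 A" and "normal2 B"
    and "opnorm2 (A + B) = opnorm2 A + opnorm2 B"
  shows "aligned A B \<or> skew_aligned A B"
proof -
  let ?a = "opnorm2 A" and ?b = "opnorm2 B"
  have a: "0 < ?a" and b: "0 < ?b"
    using assms(1,2) by (simp_all add: opnorm2_pos)
  obtain x u where x: "norm x = 1" and u: "norm u = 1"
    and Ax: "A *v x = ?a *\<^sub>R u" and Bx: "B *v x = ?b *\<^sub>R u"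
    using common_extremal_if_opnorm2_add_eq[OF assms(1,5)] .
  define U where "U = umat x 1"
  define w where "w = cadj U *v u"
  have U: "unitary2 U"
    unfolding U_def using x by (simp add: unitary2_umat)
  have x_col: "U *v vec2 1 0 = x"
    unfolding U_def by (rule umat_first_column)
  have w: "norm w = 1"
    unfolding w_def using U u by (simp add: norm_unitary2_mult unitary2_cadj)
  have reduced: "w $ 2 = 0 \<and> (\<exists>q. cmod q \<le> opnorm2 M \<and> cadj U ** M ** U = mat2 (of_real (opnorm2 M) * w $ 1) 0 0 q)
      \<or> w $ 2 \<noteq> 0 \<and> (\<exists>\<omega>. cmod \<omega> = 1 \<and> cadj U ** M ** U = opnorm2 M *\<^sub>R umat w \<omega>)"
    if "normal2 M" and "M \<noteq> 0" and "M *v x = opnorm2 M *\<^sub>R u" for M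
    unfolding w_def using unitary2_conj_extremal_cases[OF U that(1) opnorm2_pos[OF that(2)] order_refl _ u]
      that(3) x_col by simp
  note A = reduced[OF assms(3,1) Ax] and B = reduced[OF assms(4,2) Bx]
  show ?thesis
  proof (cases "w $ 2 = 0")
    case True
    then have "cmod (w $ 1) = 1"
      using w norm_ge_zero[of "w $ 1"] by (auto simp: norm_eq_1_iff_coords power2_eq_1_iff)
    with True A B U a b show ?thesis
      unfolding aligned_iff_diagonal by blast
  next
    case False
    then obtain \<omega>1 \<omega>2 where \<omega>: "cmod \<omega>1 = 1" "cmod \<omega>2 = 1"
      and A': "cadj U ** A ** U = ?a *\<^sub>R umat w \<omega>1" and B': "cadj U ** B ** U = ?b *\<^sub>R umat w \<omega>2"
      using A B by blast
    show ?thesis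
    proof (cases "\<omega>1 = \<omega>2")
      case True
      then show ?thesis
        using aligned_if_conj_equal_umat[OF U a b w \<omega>(1) A'] B' by simp
    next
      case False
      then show ?thesis
        using skew_aligned_if_conj_umat[OF U a b w \<open>w $ 2 \<noteq> 0\<close> \<omega> _ A' B'] by simp
    qed
  qed
qed

theorem lemma5p3:
  fixes A B :: cmat2
  assumes "A \<noteq> 0" and "B \<noteq> 0" and "normal2 A" and "normal2 B"
  shows "(opnorm2 (A + B) = opnorm2 A + opnorm2 B \<longleftrightarrow> aligned A B \<or> skew_aligned A B)
       \<and> \<not> (aligned A B \<and> skew_aligned A B)
       \<and> (aligned A B \<longrightarrow> A ** B = B ** A)
       \<and> (skew_aligned A B \<longrightarrow> A ** B \<noteq> B ** A)"
  using aligned_or_skew_aligned_if_opnorm2_add_eq[OF assms]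
    aligned_imp_opnorm2_add_eq skew_aligned_imp_opnorm2_add_eq
    aligned_imp_commute skew_aligned_imp_not_commute
  by blast

end
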